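(* Let $\mathbb{X}=\{1,2,3,\dots\}$ and let $\mu$ satisfy, for some $p>1$ and constants $0<k_0\le k_1$, $k_0x^{-p}\le\mu(\{x\})\le k_1x^{-p}$ for all $x$. Let $\tau\in(0,p)$ and let $(\epsilon_n)$ satisfy $cn^{-\tau}\le\epsilon_n\le Cn^{-\tau}$ for constants $0<c\le C$ (with $\epsilon_n<1$). Define $$\xi_n=\log\frac1{\epsilon_n}\cdot\sup_{A\in\sigma(\tilde\Gamma_{\epsilon_n/2})}|\mu(A)-\hat\mu_n(A)|.$$ Then $\xi_n\to0$ $\mathbb{P}_\mu$-a.s., and moreover $\xi_n=o(n^{-q})$ $\mathbb{P}_\mu$-a.s. for every $q\in\big(0,\frac{1-\tau/p}{2}\big)$.
   Context: $\log$ is the logarithm to a fixed base $b>1$. Given i.i.d. $X_1,X_2,\dots\sim\mu$ with law $\mathbb{P}_\mu$, $\hat\mu_n(A)=\frac1n\sum_{k=1}^n\mathbb{1}_A(X_k)$. For $\epsilon>0$ the (deterministic) oracle set is $\tilde\Gamma_\epsilon=\{x\in\mathbb{X}:\mu(\{x\})\ge\epsilon\}$, and $\sigma(\tilde\Gamma_\epsilon)$ is the finite $\sigma$-field generated by the partition $\{\{x\}:x\in\tilde\Gamma_\epsilon\}\cup\{\mathbb{X}\setminus\tilde\Gamma_\epsilon\}$. *)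

theory Defs
  imports "HOL-Probability.Probability" "HOL-Library.Landau_Symbols"
begin

text \<open>Empirical measure of A after n observations of the sequence X at outcome w
  (observations indexed 0..n-1, corresponding to X_1..X_n of the paper).\<close>
definition emp_measure :: "(nat \<Rightarrow> 'a \<Rightarrow> 'b) \<Rightarrow> nat \<Rightarrow> 'b set \<Rightarrow> 'a \<Rightarrow> real" where
  "emp_measure X n A w = (1 / real n) * (\<Sum>k<n. indicator A (X k w))"

definition oracle_set :: "'b pmf \<Rightarrow> real \<Rightarrow> 'b set" where
  "oracle_set \<mu> eps = {x. pmf \<mu> x \<ge> eps}"

definition oracle_sigma :: "'b set \<Rightarrow> 'b set set" where
  "oracle_sigma G = sigma_sets UNIV ({{x} | x. x \<in> G} \<union> {UNIV - G})"

definition xi :: "real \<Rightarrow> 'b pmf \<Rightarrow> (nat \<Rightarrow> 'a \<Rightarrow> 'b) \<Rightarrow> (nat \<Rightarrow> real) \<Rightarrow> nat \<Rightarrow> 'a \<Rightarrow> real" where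
  "xi b \<mu> X eps n w = log b (1 / eps n) *
     (SUP A\<in>oracle_sigma (oracle_set \<mu> (eps n / 2)).
        \<bar>measure_pmf.prob \<mu> A - emp_measure X n A w\<bar>)"

end

theory Submission
  imports Defs "HOL-Real_Asymp.Real_Asymp"
begin

text \<open>
  Each set A of the oracle sigma-field satisfies Hoeffding's inequality
  P(|mu A - mu_n A| \<ge> t) \<le> 2 exp(-2 n t^2). Under the power-law tail the oracle set
  for the threshold eps_n/2 \<asymp> n^{-tau} has at most O(n^{tau/p}) atoms, so the sigma-field
  has 2^{O(n^{tau/p})} members, and a union bound at level t = n^{-q} with
  2q < 1 - tau/p still gives summable probabilities. By Borel-Cantelli the uniform
  deviation is eventually at most n^{-q}, and the factor log(1/eps_n) = O(log n) is
  absorbed by choosing q slightly larger than required.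
\<close>

lemma emp_measure_nonneg: "0 \<le> emp_measure X n A w"
  by (simp add: emp_measure_def sum_nonneg)

lemma emp_measure_le_1: "emp_measure X n A w \<le> 1"
proof (cases "n = 0")
  case False
  have "(\<Sum>k<n. indicator A (X k w) :: real) \<le> (\<Sum>k<n. 1)"
    by (intro sum_mono) (simp add: indicator_def)
  with False show ?thesis by (simp add: emp_measure_def field_simps)
qed (simp add: emp_measure_def)

lemma abs_prob_minus_emp_measure_le_1:
  "\<bar>measure_pmf.prob \<mu> A - emp_measure X n A w\<bar> \<le> 1"
  using emp_measure_nonneg[of X n A w] emp_measure_le_1[of X n A w]
    measure_pmf.prob_le_1[of \<mu> A] measure_nonneg[of "measure_pmf \<mu>" A]
  by linarith

lemma borel_measurable_emp_measure:
  assumes "\<And>k. X k \<in> measurable M (count_space UNIV)"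
  shows "(\<lambda>w. emp_measure X n A w) \<in> borel_measurable M"
proof -
  have "(\<lambda>w. indicator A (X k w) :: real) \<in> borel_measurable M" for k
    using measurable_comp[OF assms[of k] borel_measurable_count_space[of "indicator A" UNIV]]
    by (simp add: comp_def)
  then show ?thesis unfolding emp_measure_def by measurable
qed

lemma sets_emp_measure_deviation_ge:
  assumes "\<And>k. X k \<in> measurable M (count_space UNIV)"
  shows "{w\<in>space M. t \<le> \<bar>measure_pmf.prob \<mu> A - emp_measure X n A w\<bar>} \<in> sets M"
proof -
  have "(\<lambda>w. \<bar>measure_pmf.prob \<mu> A - emp_measure X n A w\<bar>) \<in> borel_measurable M"
    using borel_measurable_emp_measure[OF assms] by measurable
  then show ?thesis by measurable
qed

lemma summable_of_le_square_decay:
  fixes a F :: "nat \<Rightarrow> real"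
  assumes "((\<lambda>n. real n ^ 2 * F n) \<longlongrightarrow> 0) at_top"
    and "\<And>n. 0 \<le> a n" and "\<And>n. n \<ge> 1 \<Longrightarrow> a n \<le> F n"
  shows "summable a"
proof -
  have "eventually (\<lambda>n. real n ^ 2 * F n < 1) at_top"
    using assms(1) by (rule order_tendstoD) simp
  then obtain N where N: "\<And>n. n \<ge> N \<Longrightarrow> real n ^ 2 * F n < 1"
    by (auto simp: eventually_at_top_linorder)
  show ?thesis
  proof (rule summable_comparison_test'[OF inverse_power_summable[of 2]])
    fix n assume "n \<ge> Suc N"
    then have "n \<ge> 1" and "F n * real n ^ 2 < 1"
      using N[of n] by (simp_all add: mult.commute)
    then have "F n \<le> inverse (real n ^ 2)"
      by (simp add: inverse_eq_divide pos_le_divide_eq)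
    then show "norm (a n) \<le> inverse (real n ^ 2)"
      using assms(2,3)[of n] \<open>n \<ge> 1\<close> by simp
  qed simp
qed

context prob_space
begin

lemma hoeffding_emp_measure:
  fixes X :: "nat \<Rightarrow> 'a \<Rightarrow> 'b" and \<mu> :: "'b pmf"
  assumes Xm: "\<And>k. X k \<in> measurable M (count_space UNIV)"
    and ind: "indep_vars (\<lambda>_. count_space UNIV) X UNIV"
    and dX: "\<And>k. distr M (count_space UNIV) (X k) = measure_pmf \<mu>"
    and "n \<ge> 1" and "t \<ge> 0"
  shows "prob {w\<in>space M. t \<le> \<bar>measure_pmf.prob \<mu> A - emp_measure X n A w\<bar>}
          \<le> 2 * exp (-2 * real n * t\<^sup>2)"
proof -
  let ?Z = "\<lambda>i w. indicator A (X i w) :: real"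
  have ind_meas: "(\<lambda>x. indicator A x :: real) \<in> borel_measurable (count_space UNIV)"
    by simp
  have distr_Z: "distr M borel (?Z i) = distr (measure_pmf \<mu>) borel (indicator A)" for i
  proof -
    have "distr M borel (?Z i) = distr (distr M (count_space UNIV) (X i)) borel (indicator A)"
      by (subst distr_distr[OF ind_meas Xm]) (simp add: comp_def)
    then show ?thesis by (simp add: dX)
  qed
  have expectation_Z: "expectation (?Z 0) = measure_pmf.prob \<mu> A"
  proof -
    have "expectation (?Z 0) = integral\<^sup>L (distr M (count_space UNIV) (X 0)) (indicator A)"
      by (subst integral_distr[OF Xm ind_meas]) simp
    then show ?thesis by (simp add: dX)
  qed
  interpret Hoeffding_ineq_iid M "{..<n}" ?Z "?Z 0" 0 1 "measure_pmf.prob \<mu> A"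
  proof unfold_locales
    show "indep_vars (\<lambda>_. borel) ?Z {..<n}"
      by (rule indep_vars_compose2[OF indep_vars_subset[OF ind]]) auto
    show "distr M borel (?Z i) = distr M borel (?Z 0)" for i
      by (simp add: distr_Z)
    show "random_variable borel (?Z 0)"
      using measurable_comp[OF Xm ind_meas] by (simp add: comp_def)
    show "AE x in M. ?Z 0 x \<in> {0..1}"
      by (simp add: indicator_def)
    show "measure_pmf.prob \<mu> A \<equiv> expectation (?Z 0)"
      using expectation_Z by simp
  qed auto
  have "prob {w\<in>space M. t \<le> \<bar>(\<Sum>i\<in>{..<n}. ?Z i w) / real (card {..<n}) - measure_pmf.prob \<mu> A\<bar>}
        \<le> 2 * exp (-2 * real (card {..<n}) * t\<^sup>2 / (1 - 0)\<^sup>2)"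
    using \<open>n \<ge> 1\<close> by (intro Hoeffding_ineq_abs_ge' \<open>t \<ge> 0\<close>) (auto simp: lessThan_empty_iff)
  then show ?thesis
    by (simp add: emp_measure_def abs_minus_commute)
qed

lemma prob_uniform_deviation_ge_le:
  fixes X :: "nat \<Rightarrow> 'a \<Rightarrow> 'b" and \<mu> :: "'b pmf" and S :: "'b set set"
  assumes Xm: "\<And>k. X k \<in> measurable M (count_space UNIV)"
    and ind: "indep_vars (\<lambda>_. count_space UNIV) X UNIV"
    and dX: "\<And>k. distr M (count_space UNIV) (X k) = measure_pmf \<mu>"
    and "finite S" and "n \<ge> 1" and "t \<ge> 0"
  shows "prob {w\<in>space M. \<exists>A\<in>S. t \<le> \<bar>measure_pmf.prob \<mu> A - emp_measure X n A w\<bar>}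
          \<le> real (card S) * (2 * exp (-2 * real n * t\<^sup>2))"
proof -
  let ?E = "\<lambda>A. {w\<in>space M. t \<le> \<bar>measure_pmf.prob \<mu> A - emp_measure X n A w\<bar>}"
  have "{w\<in>space M. \<exists>A\<in>S. t \<le> \<bar>measure_pmf.prob \<mu> A - emp_measure X n A w\<bar>} = (\<Union>A\<in>S. ?E A)"
    by blast
  also have "prob \<dots> \<le> (\<Sum>A\<in>S. prob (?E A))"
    by (rule finite_measure_subadditive_finite[OF \<open>finite S\<close>])
      (intro image_subsetI sets_emp_measure_deviation_ge[OF Xm])
  also have "\<dots> \<le> (\<Sum>A\<in>S. 2 * exp (-2 * real n * t\<^sup>2))"
    by (rule sum_mono) (rule hoeffding_emp_measure[OF Xm ind dX \<open>n \<ge> 1\<close> \<open>t \<ge> 0\<close>])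
  finally show ?thesis by simp
qed

text \<open>The union bound at level n^{-q} is 4 exp(K n^alpha - 2 n^{1-2q}), which is
  O(n^{-2}) because alpha < 1 - 2q.\<close>

lemma AE_eventually_uniform_deviation_less:
  fixes X :: "nat \<Rightarrow> 'a \<Rightarrow> 'b" and \<mu> :: "'b pmf" and S :: "nat \<Rightarrow> 'b set set"
  assumes Xm: "\<And>k. X k \<in> measurable M (count_space UNIV)"
    and ind: "indep_vars (\<lambda>_. count_space UNIV) X UNIV"
    and dX: "\<And>k. distr M (count_space UNIV) (X k) = measure_pmf \<mu>"
    and fin: "\<And>n. n \<ge> 1 \<Longrightarrow> finite (S n)"
    and card: "\<And>n. n \<ge> 1 \<Longrightarrow> real (card (S n)) \<le> 2 * exp (K * real n powr \<alpha>)"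
    and "0 < \<alpha>" and "0 < q" and "q < (1 - \<alpha>) / 2"
  shows "AE w in M. eventually (\<lambda>n. \<forall>A\<in>S n.
           \<bar>measure_pmf.prob \<mu> A - emp_measure X n A w\<bar> < real n powr (-q)) sequentially"
proof -
  define B where "B n = {w\<in>space M. n \<ge> 1 \<and> (\<exists>A\<in>S n.
      real n powr (-q) \<le> \<bar>measure_pmf.prob \<mu> A - emp_measure X n A w\<bar>)}" for n
  define d where "d = 1 - 2 * q - \<alpha>"
  have "0 < d"
    using \<open>q < (1 - \<alpha>) / 2\<close> by (simp add: d_def field_simps)
  define F where "F n = 4 * exp (K * real n powr \<alpha> - 2 * real n powr (\<alpha> + d))" for n
  have B_sets: "B n \<in> sets M" for n
  proof (cases "n \<ge> 1")
    case True
    then have "B n = (\<Union>A\<in>S n. {w\<in>space M.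
        real n powr (-q) \<le> \<bar>measure_pmf.prob \<mu> A - emp_measure X n A w\<bar>})"
      by (auto simp: B_def)
    also have "\<dots> \<in> sets M"
      using sets_emp_measure_deviation_ge[OF Xm] True by (intro sets.finite_UN fin)
    finally show ?thesis .
  qed (simp add: B_def)
  have B_le: "prob (B n) \<le> F n" if "n \<ge> 1" for n
  proof -
    have exponent: "real n * (real n powr (-q))\<^sup>2 = real n powr (\<alpha> + d)"
      using that by (simp add: d_def power2_eq_square powr_add[symmetric] powr_mult_base)
    have "prob (B n) \<le> real (card (S n)) * (2 * exp (-2 * real n powr (\<alpha> + d)))"
      using prob_uniform_deviation_ge_le[OF Xm ind dX fin[OF that] that, of "real n powr (-q)"] that
      by (simp add: B_def exponent mult.assoc)
    also have "\<dots> \<le> 2 * exp (K * real n powr \<alpha>) * (2 * exp (-2 * real n powr (\<alpha> + d)))"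
      by (intro mult_right_mono card that) simp
    also have "\<dots> = F n"
      by (simp add: F_def exp_diff exp_minus field_simps)
    finally show ?thesis .
  qed
  have "((\<lambda>n::nat. real n ^ 2 * F n) \<longlongrightarrow> 0) at_top"
    unfolding F_def using \<open>0 < \<alpha>\<close> \<open>0 < d\<close> by real_asymp
  then have "summable (\<lambda>n. prob (B n))"
    by (rule summable_of_le_square_decay[OF _ measure_nonneg B_le])
  then have "AE w in M. eventually (\<lambda>n. w \<in> space M - B n) sequentially"
    by (intro borel_cantelli_AE1 B_sets) (auto simp: less_top[symmetric])
  then show ?thesis
  proof eventually_elim
    case (elim w)
    from elim eventually_ge_at_top[of 1] show ?case
      by eventually_elim (auto simp: B_def not_le)
  qed
qed

end

lemma oracle_sigma_cases:
  assumes "A \<in> oracle_sigma G"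
  shows "- G \<subseteq> A \<or> A \<inter> - G = {}"
  using assms unfolding oracle_sigma_def
proof (induction rule: sigma_sets.induct)
  case (Union a)
  then show ?case by (cases "\<exists>i. - G \<subseteq> a i") blast+
qed auto

lemma empty_in_oracle_sigma: "{} \<in> oracle_sigma G"
  unfolding oracle_sigma_def by (rule sigma_sets.Empty)

lemma finite_oracle_sigma_card_le:
  assumes "finite G"
  shows "finite (oracle_sigma G)" and "card (oracle_sigma G) \<le> 2 * 2 ^ card G"
proof -
  let ?f = "\<lambda>(B, e). B \<union> (if e then - G else {})"
  have fin: "finite (Pow G \<times> (UNIV :: bool set))"
    using assms by simp
  have sub: "oracle_sigma G \<subseteq> ?f ` (Pow G \<times> UNIV)"
  proof
    fix A assume A: "A \<in> oracle_sigma G"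
    then have "A = ?f (A \<inter> G, - G \<subseteq> A)"
      using oracle_sigma_cases[OF A] by auto
    then show "A \<in> ?f ` (Pow G \<times> UNIV)" by blast
  qed
  show "finite (oracle_sigma G)"
    using finite_subset[OF sub finite_imageI[OF fin]] .
  have "card (oracle_sigma G) \<le> card (Pow G \<times> (UNIV :: bool set))"
    using card_mono[OF finite_imageI[OF fin] sub] card_image_le[OF fin] by (rule order_trans)
  then show "card (oracle_sigma G) \<le> 2 * 2 ^ card G"
    using assms by (simp add: card_cartesian_product card_Pow)
qed

lemma card_oracle_set_le:
  fixes \<mu> :: "nat pmf"
  assumes "p > 0" and "e > 0" and "pmf \<mu> 0 = 0"
    and tail: "\<And>x. x \<ge> 1 \<Longrightarrow> pmf \<mu> x \<le> k * real x powr (-p)"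
  shows "finite (oracle_set \<mu> e)" and "real (card (oracle_set \<mu> e)) \<le> (k / e) powr (1 / p)"
proof -
  let ?R = "(k / e) powr (1 / p)"
  have atom_le: "x \<ge> 1 \<and> real x \<le> ?R" if "x \<in> oracle_set \<mu> e" for x
  proof -
    have px: "e \<le> pmf \<mu> x" using that by (simp add: oracle_set_def)
    then have "x \<ge> 1" using assms(2,3) by (cases x) auto
    then have xp: "real x powr p > 0" by simp
    have "e \<le> k / real x powr p"
      using px tail[OF \<open>x \<ge> 1\<close>] by (simp add: powr_minus_divide)
    then have "real x powr p \<le> k / e"
      using xp \<open>e > 0\<close> by (simp add: field_simps)
    then have "(real x powr p) powr (1 / p) \<le> ?R"
      using \<open>p > 0\<close> xp by (intro powr_mono2) auto
    then show ?thesis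
      using \<open>p > 0\<close> \<open>x \<ge> 1\<close> by (simp add: powr_powr)
  qed
  have sub: "oracle_set \<mu> e \<subseteq> {1..nat \<lfloor>?R\<rfloor>}"
    using atom_le by (auto simp: le_nat_floor)
  then show "finite (oracle_set \<mu> e)"
    by (rule finite_subset) simp
  have "card (oracle_set \<mu> e) \<le> nat \<lfloor>?R\<rfloor>"
    using card_mono[OF _ sub] by simp
  moreover have "real (nat \<lfloor>?R\<rfloor>) \<le> ?R"
    using of_int_floor_le[of ?R] by (cases "\<lfloor>?R\<rfloor> \<ge> 0") auto
  ultimately show "real (card (oracle_set \<mu> e)) \<le> ?R"
    by (meson of_nat_le_iff order_trans)
qed

lemma pos_of_powr_lower_bound:
  assumes "c > 0" and "n \<ge> 1" and "c * real n powr (-\<tau>) \<le> e"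
  shows "e > 0"
proof -
  have "0 < c * real n powr (-\<tau>)"
    using assms(1,2) by simp
  with assms(3) show ?thesis
    by linarith
qed

lemma card_oracle_sigma_le_exp:
  fixes \<mu> :: "nat pmf"
  assumes "p > 0" and "k \<ge> 0" and "c > 0" and "pmf \<mu> 0 = 0"
    and tail: "\<And>x. x \<ge> 1 \<Longrightarrow> pmf \<mu> x \<le> k * real x powr (-p)"
    and "n \<ge> 1" and e_lower: "c * real n powr (-\<tau>) \<le> e"
  shows "finite (oracle_sigma (oracle_set \<mu> (e / 2)))"
    and "real (card (oracle_sigma (oracle_set \<mu> (e / 2))))
           \<le> 2 * exp (ln 2 * (2 * k / c) powr (1 / p) * real n powr (\<tau> / p))"
proof -
  let ?G = "oracle_set \<mu> (e / 2)"
  have e: "e / 2 > 0"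
    using pos_of_powr_lower_bound[OF \<open>c > 0\<close> \<open>n \<ge> 1\<close> e_lower] by simp
  have fin: "finite ?G"
    by (rule card_oracle_set_le(1)[OF \<open>p > 0\<close> e \<open>pmf \<mu> 0 = 0\<close> tail])
  then show "finite (oracle_sigma ?G)"
    by (rule finite_oracle_sigma_card_le(1))
  have np: "real n powr (-\<tau>) > 0"
    using \<open>n \<ge> 1\<close> by simp
  have "k / (e / 2) = 2 * k / e"
    by simp
  also have "\<dots> \<le> 2 * k / (c * real n powr (-\<tau>))"
    using e_lower e np \<open>c > 0\<close> \<open>k \<ge> 0\<close> by (intro divide_left_mono) auto
  also have "\<dots> = (2 * k / c) * real n powr \<tau>"
    using np \<open>c > 0\<close> by (simp add: powr_minus field_simps)
  finally have "(k / (e / 2)) powr (1 / p) \<le> ((2 * k / c) * real n powr \<tau>) powr (1 / p)"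
    using e \<open>k \<ge> 0\<close> \<open>p > 0\<close> by (intro powr_mono2) auto
  also have "\<dots> = (2 * k / c) powr (1 / p) * (real n powr \<tau>) powr (1 / p)"
    by (rule powr_mult)
  also have "\<dots> = (2 * k / c) powr (1 / p) * real n powr (\<tau> / p)"
    by (simp add: powr_powr)
  finally have card_G: "real (card ?G) \<le> (2 * k / c) powr (1 / p) * real n powr (\<tau> / p)"
    using card_oracle_set_le(2)[OF \<open>p > 0\<close> e \<open>pmf \<mu> 0 = 0\<close> tail] by linarith
  have "card (oracle_sigma ?G) \<le> 2 * 2 ^ card ?G"
    by (rule finite_oracle_sigma_card_le(2)[OF fin])
  then have "real (card (oracle_sigma ?G)) \<le> 2 * 2 ^ card ?G"
    using of_nat_mono[where 'a = real] by fastforce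
  also have "(2::real) ^ card ?G = exp (ln 2 * real (card ?G))"
    by (subst mult.commute, subst exp_of_nat_mult) simp
  also have "\<dots> \<le> exp (ln 2 * (2 * k / c) powr (1 / p) * real n powr (\<tau> / p))"
    using card_G by (simp add: mult.assoc)
  finally show "real (card (oracle_sigma ?G))
      \<le> 2 * exp (ln 2 * (2 * k / c) powr (1 / p) * real n powr (\<tau> / p))"
    by simp
qed

lemma abs_xi_le:
  assumes "b > 1" and "0 < eps n" and "eps n \<le> 1"
    and dev: "\<And>A. A \<in> oracle_sigma (oracle_set \<mu> (eps n / 2)) \<Longrightarrow>
                \<bar>measure_pmf.prob \<mu> A - emp_measure X n A w\<bar> \<le> t"
  shows "\<bar>xi b \<mu> X eps n w\<bar> \<le> log b (1 / eps n) * t"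
proof -
  let ?S = "oracle_sigma (oracle_set \<mu> (eps n / 2))"
  define s where "s = (SUP A\<in>?S. \<bar>measure_pmf.prob \<mu> A - emp_measure X n A w\<bar>)"
  have bdd: "bdd_above ((\<lambda>A. \<bar>measure_pmf.prob \<mu> A - emp_measure X n A w\<bar>) ` ?S)"
    by (rule bdd_aboveI2[where M = 1]) (rule abs_prob_minus_emp_measure_le_1)
  have "0 \<le> s"
    unfolding s_def using empty_in_oracle_sigma
    by (intro cSUP_upper2[OF bdd, of "{}"]) auto
  moreover have "s \<le> t"
    unfolding s_def using empty_in_oracle_sigma dev by (intro cSUP_least) auto
  moreover have "0 \<le> log b (1 / eps n)"
    using assms(1-3) by simp
  ultimately show ?thesis
    by (simp add: xi_def s_def[symmetric] mult_left_mono)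
qed

lemma log_inverse_le_of_powr_lower_bound:
  assumes "b > 1" and "c > 0" and "n \<ge> 1" and "c * real n powr (-\<tau>) \<le> e"
  shows "log b (1 / e) \<le> (\<tau> * ln (real n) - ln c) / ln b"
proof -
  have "e > 0"
    using pos_of_powr_lower_bound[OF assms(2-4)] .
  have "1 / e \<le> real n powr \<tau> / c"
    using assms \<open>e > 0\<close> by (simp add: powr_minus field_simps)
  then have "log b (1 / e) \<le> log b (real n powr \<tau> / c)"
    using assms \<open>e > 0\<close> by (subst log_le_cancel_iff) auto
  also have "\<dots> = (\<tau> * ln (real n) - ln c) / ln b"
    using assms by (simp add: log_def ln_div ln_powr)
  finally show ?thesis .
qed

lemma tendsto_zero_of_smallo_powr:
  assumes "f \<in> o(\<lambda>n. real n powr (-q))" and "q > 0"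
  shows "f \<longlonglongrightarrow> 0"
proof -
  have "(\<lambda>n. real n powr (-q)) \<in> o(\<lambda>_. 1)"
    using \<open>q > 0\<close> by real_asymp
  with assms(1) have "f \<in> o(\<lambda>_. 1)"
    by (rule landau_o.small_trans)
  then have "(\<lambda>n. f n / 1) \<longlonglongrightarrow> 0"
    by (rule smalloD_tendsto)
  then show ?thesis
    by simp
qed

lemma AE_xi_smallo:
  fixes M :: "'a measure" and X :: "nat \<Rightarrow> 'a \<Rightarrow> nat" and \<mu> :: "nat pmf"
  assumes "prob_space M"
    and Xm: "\<And>k. X k \<in> measurable M (count_space UNIV)"
    and ind: "prob_space.indep_vars M (\<lambda>_. count_space UNIV) X UNIV"
    and dX: "\<And>k. distr M (count_space UNIV) (X k) = measure_pmf \<mu>"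
    and "b > 1" and "k \<ge> 0" and "pmf \<mu> 0 = 0"
    and tail: "\<And>x. x \<ge> 1 \<Longrightarrow> pmf \<mu> x \<le> k * real x powr (-p)"
    and "0 < \<tau>" and "\<tau> < p" and "c > 0"
    and eps_lower: "\<And>n. n \<ge> 1 \<Longrightarrow> c * real n powr (-\<tau>) \<le> eps n"
    and eps_le_1: "\<And>n. n \<ge> 1 \<Longrightarrow> eps n \<le> 1"
    and "0 < q" and "q < (1 - \<tau> / p) / 2"
  shows "AE w in M. (\<lambda>n. xi b \<mu> X eps n w) \<in> o(\<lambda>n. real n powr (-q))"
proof -
  interpret prob_space M by fact
  define \<alpha> where "\<alpha> = \<tau> / p"
  define d where "d = ((1 - \<alpha>) / 2 - q) / 2"
  define S where "S n = oracle_sigma (oracle_set \<mu> (eps n / 2))" for n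
  have "p > 0"
    using \<open>0 < \<tau>\<close> \<open>\<tau> < p\<close> by linarith
  then have "0 < \<alpha>" "\<alpha> < 1"
    using \<open>0 < \<tau>\<close> \<open>\<tau> < p\<close> by (simp_all add: \<alpha>_def)
  have "q < (1 - \<alpha>) / 2"
    using \<open>q < (1 - \<tau> / p) / 2\<close> by (simp only: \<alpha>_def)
  then have "0 < d" "0 < q + d" "q + d < (1 - \<alpha>) / 2"
    using \<open>0 < q\<close> unfolding d_def by (simp_all add: field_simps)
  note card_S = card_oracle_sigma_le_exp[OF \<open>p > 0\<close> \<open>k \<ge> 0\<close> \<open>c > 0\<close> \<open>pmf \<mu> 0 = 0\<close> tail
      _ eps_lower, folded S_def \<alpha>_def]
  have "AE w in M. eventually (\<lambda>n. \<forall>A\<in>S n.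
          \<bar>measure_pmf.prob \<mu> A - emp_measure X n A w\<bar> < real n powr (-(q + d))) sequentially"
    by (rule AE_eventually_uniform_deviation_less[OF Xm ind dX card_S
        \<open>0 < \<alpha>\<close> \<open>0 < q + d\<close> \<open>q + d < (1 - \<alpha>) / 2\<close>])
  then show ?thesis
  proof eventually_elim
    case (elim w)
    define g where "g n = (\<tau> * ln (real n) - ln c) / ln b * real n powr (-(q + d))" for n :: nat
    have "eventually (\<lambda>n. \<bar>xi b \<mu> X eps n w\<bar> \<le> g n) sequentially"
      using elim eventually_ge_at_top[of 1]
    proof eventually_elim
      case (elim n)
      then have "\<bar>xi b \<mu> X eps n w\<bar> \<le> log b (1 / eps n) * real n powr (-(q + d))"
        using pos_of_powr_lower_bound[OF \<open>c > 0\<close> _ eps_lower] eps_le_1 \<open>b > 1\<close>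
        by (intro abs_xi_le) (auto simp: S_def less_imp_le)
      also have "\<dots> \<le> g n"
        unfolding g_def
        using log_inverse_le_of_powr_lower_bound[OF \<open>b > 1\<close> \<open>c > 0\<close> _ eps_lower] elim
        by (intro mult_right_mono) auto
      finally show ?case .
    qed
    then have "eventually (\<lambda>n. norm (xi b \<mu> X eps n w) \<le> 1 * norm (g n)) sequentially"
      by eventually_elim (metis abs_ge_self mult_1 order_trans real_norm_def)
    then have "(\<lambda>n. xi b \<mu> X eps n w) \<in> O(g)"
      by (rule bigoI)
    also have "g \<in> o(\<lambda>n. real n powr (-q))"
      unfolding g_def using \<open>0 < d\<close> \<open>b > 1\<close> by real_asymp
    finally show ?case .
  qed
qed

theorem mainTheorem13:
  fixes M :: "'a measure" and X :: "nat \<Rightarrow> 'a \<Rightarrow> nat" and \<mu> :: "nat pmf"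
    and b p k0 k1 \<tau> c C :: real and eps :: "nat \<Rightarrow> real"
  assumes "prob_space M"
    and "\<And>k. X k \<in> measurable M (count_space UNIV)"
    and "prob_space.indep_vars M (\<lambda>_. count_space UNIV) X UNIV"
    and "\<And>k. distr M (count_space UNIV) (X k) = measure_pmf \<mu>"
    and "b > 1"
    and "p > 1" and "0 < k0" and "k0 \<le> k1"
    and "pmf \<mu> 0 = 0"
    and "\<And>x. x \<ge> 1 \<Longrightarrow> k0 * real x powr (-p) \<le> pmf \<mu> x \<and> pmf \<mu> x \<le> k1 * real x powr (-p)"
    and "0 < \<tau>" and "\<tau> < p"
    and "0 < c" and "c \<le> C"
    and "\<And>n. n \<ge> 1 \<Longrightarrow> c * real n powr (-\<tau>) \<le> eps n \<and> eps n \<le> C * real n powr (-\<tau>)"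
    and "\<And>n. n \<ge> 1 \<Longrightarrow> eps n < 1"
  shows "(AE w in M. (\<lambda>n. xi b \<mu> X eps n w) \<longlonglongrightarrow> 0) \<and>
         (\<forall>q. 0 < q \<and> q < (1 - \<tau> / p) / 2 \<longrightarrow>
            (AE w in M. (\<lambda>n. xi b \<mu> X eps n w) \<in> o(\<lambda>n. real n powr (-q))))"
proof -
  have "0 \<le> k1"
    using assms(7,8) by linarith
  have tail: "pmf \<mu> x \<le> k1 * real x powr (-p)" if "x \<ge> 1" for x
    using assms(10)[OF that] by (rule conjunct2)
  have eps_lower: "c * real n powr (-\<tau>) \<le> eps n" if "n \<ge> 1" for n
    using assms(15)[OF that] by (rule conjunct1)
  have eps_le_1: "eps n \<le> 1" if "n \<ge> 1" for n
    using assms(16)[OF that] by (rule less_imp_le)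
  have smallo: "AE w in M. (\<lambda>n. xi b \<mu> X eps n w) \<in> o(\<lambda>n. real n powr (-q))"
    if "0 < q" "q < (1 - \<tau> / p) / 2" for q
    by (rule AE_xi_smallo[OF assms(1-5) \<open>0 \<le> k1\<close> assms(9) tail assms(11-13) eps_lower eps_le_1 that])
  define q0 where "q0 = (1 - \<tau> / p) / 4"
  have "0 < p"
    using assms(11,12) by linarith
  then have "0 < 1 - \<tau> / p"
    using assms(12) by simp
  then have "0 < q0" "q0 < (1 - \<tau> / p) / 2"
    unfolding q0_def by (argo, argo)
  from smallo[OF this] have "AE w in M. (\<lambda>n. xi b \<mu> X eps n w) \<longlonglongrightarrow> 0"
    by eventually_elim (rule tendsto_zero_of_smallo_powr[OF _ \<open>0 < q0\<close>])
  moreover have "\<forall>q. 0 < q \<and> q < (1 - \<tau> / p) / 2 \<longrightarrow>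
      (AE w in M. (\<lambda>n. xi b \<mu> X eps n w) \<in> o(\<lambda>n. real n powr (-q)))"
    using smallo by blast
  ultimately show ?thesis ..
qed

end
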